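(* Let $b\ge 2$ and $n\ge 0$ be integers. Then $bt+(b-1)\in T_b(n)$ for every $t\in T_b(n)\setminus\{0\}$.
   Context: For integers $b\ge 2$, $n\ge 0$, $i\ge0$ put $s_i=(b+1)b^{n+i}-1$ and $T_b(n)=\langle\{s_i:i\in\mathbb{N}\}\rangle$, the submonoid of $(\mathbb{N},+)$ generated by the $s_i$. *)

theory Defs
  imports Main
begin

definition s_gen :: "nat \<Rightarrow> nat \<Rightarrow> nat \<Rightarrow> nat" where
  "s_gen b n i = (b + 1) * b ^ (n + i) - 1"

inductive_set submonoid_gen :: "nat set \<Rightarrow> nat set" for A :: "nat set" where
  zero: "0 \<in> submonoid_gen A"
| add_gen: "a \<in> A \<Longrightarrow> x \<in> submonoid_gen A \<Longrightarrow> a + x \<in> submonoid_gen A"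

definition T :: "nat \<Rightarrow> nat \<Rightarrow> nat set" where
  "T b n = submonoid_gen (range (s_gen b n))"

end

theory Submission
  imports Defs
begin

text \<open>The affine map \<open>t \<mapsto> b t + (b - 1)\<close> sends the generator \<open>s\<^sub>i\<close> to \<open>s\<^sub>i\<^sub>+\<^sub>1\<close>.
  A nonzero \<open>t \<in> T\<^sub>b(n)\<close> splits as \<open>s\<^sub>i + x\<close> with \<open>x \<in> T\<^sub>b(n)\<close>, so
  \<open>b t + (b - 1) = s\<^sub>i\<^sub>+\<^sub>1 + b x\<close>, and \<open>b x \<in> T\<^sub>b(n)\<close> since a monoid is closed under
  multiples. None of this needs \<open>b \<ge> 2\<close>.\<close>

lemma submonoid_gen_add:
  "x \<in> submonoid_gen A \<Longrightarrow> y \<in> submonoid_gen A \<Longrightarrow> x + y \<in> submonoid_gen A"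
  by (induction x rule: submonoid_gen.induct)
     (auto simp: add.assoc intro: submonoid_gen.intros)

lemma submonoid_gen_mult:
  "x \<in> submonoid_gen A \<Longrightarrow> k * x \<in> submonoid_gen A"
  by (induction k) (auto intro: submonoid_gen_add submonoid_gen.intros)

lemma submonoid_gen_nonzero_split:
  assumes "x \<in> submonoid_gen A" and "x \<noteq> 0"
  obtains a y where "a \<in> A" and "y \<in> submonoid_gen A" and "x = a + y"
  using assms by (cases rule: submonoid_gen.cases) auto

lemma s_gen_Suc: "b * s_gen b n i + (b - 1) = s_gen b n (Suc i)"
proof (cases "b = 0")
  case False
  define q where "q = (b + 1) * b ^ (n + i)"
  have "q \<ge> 1"
    using False by (simp add: q_def Suc_le_eq)
  then have "b * (q - 1) + (b - 1) = b * q - 1"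
    using False by (simp add: right_diff_distrib')
  then show ?thesis
    by (simp add: s_gen_def q_def algebra_simps)
qed (simp add: s_gen_def)

theorem mainTheorem5:
  fixes b n t :: nat
  assumes "b \<ge> 2"
    and "t \<in> T b n - {0}"
  shows "b * t + (b - 1) \<in> T b n"
proof -
  have "t \<in> submonoid_gen (range (s_gen b n))" and "t \<noteq> 0"
    using assms(2) by (auto simp: T_def)
  then obtain i x where x: "x \<in> submonoid_gen (range (s_gen b n))"
    and t: "t = s_gen b n i + x"
    by (auto elim: submonoid_gen_nonzero_split)
  have "b * t + (b - 1) = s_gen b n (Suc i) + b * x"
    using s_gen_Suc[of b n i] t by (simp add: algebra_simps)
  also have "\<dots> \<in> submonoid_gen (range (s_gen b n))"
    using x by (auto intro: submonoid_gen.add_gen submonoid_gen_mult)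
  finally show ?thesis
    by (simp add: T_def)
qed

end
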